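(* Let $\nu:S\setminus\{0\}\to C$ be a well-ordered injective valuation on a $\Bbbk$-vector space $S$ and let $\{S_i\}_{i\in I}$ be a family of subspaces of $S$. Then the family is $\nu$-compatible if and only if there exists a basis $\mathbf B$ of $S$ adapted to $\nu$ such that $\mathbf B\cap S_i$ is a basis of $S_i$ for every $i\in I$. Moreover, in this case, for every subset $J\subseteq I$, $\mathbf B\cap\bigcap_{j\in J}S_j$ is a basis of $\bigcap_{j\in J}S_j$, and $\nu\big((\sum_{j\in J}S_j)\setminus\{0\}\big)=\bigcup_{j\in J}\nu(S_j\setminus\{0\})$.
   Context: A valuation on a $\Bbbk$-vector space $S$ with values in a totally ordered set $(C,\le)$ is a map $\nu:S\setminus\{0\}\to C$ such that $\nu(cx)=\nu(x)$ for all $c\in\Bbbk^\times$, $x\ne0$, and $\nu(x+y)\le\max(\nu(x),\nu(y))$ whenever $x,y,x+y\neq 0$. It is well-ordered if its image is well-ordered; it is injective if there is a basis $\mathbf B$ of $S$ with $\nu|_{\mathbf B}$ injective, and such a basis is called adapted to $\nu$. A family $\{S_i\}_{i\in I}$ of subspaces is called $\nu$-compatible if for every nonempty $J\subseteq I$ one has $\nu\big((\bigcap_{j\in J}S_j)\setminus\{0\}\big)=\bigcap_{j\in J}\nu(S_j\setminus\{0\})$ (for $J=\emptyset$ the intersection is read as $S$). *)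

theory Defs
  imports Main "HOL.Vector_Spaces"
begin

(* A k-vector space is modelled by a type 'v with scalar multiplication
   scale :: 'k::field => 'v => 'v satisfying the locale vector_space.
   The ambient space S is the whole type 'v (UNIV). *)

definition is_basis_of :: "('k::field \<Rightarrow> 'v::ab_group_add \<Rightarrow> 'v) \<Rightarrow> 'v set \<Rightarrow> 'v set \<Rightarrow> bool" where
  "is_basis_of scale B V \<longleftrightarrow> B \<subseteq> V \<and> \<not> module.dependent scale B \<and> module.span scale B = V"

definition is_valuation :: "('k::field \<Rightarrow> 'v::ab_group_add \<Rightarrow> 'v) \<Rightarrow> ('v \<Rightarrow> 'c::linorder) \<Rightarrow> bool" where
  "is_valuation scale \<nu> \<longleftrightarrow>
     (\<forall>c x. c \<noteq> 0 \<longrightarrow> x \<noteq> 0 \<longrightarrow> \<nu> (scale c x) = \<nu> x) \<and>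
     (\<forall>x y. x \<noteq> 0 \<longrightarrow> y \<noteq> 0 \<longrightarrow> x + y \<noteq> 0 \<longrightarrow> \<nu> (x + y) \<le> max (\<nu> x) (\<nu> y))"

definition well_ordered_set :: "'c::linorder set \<Rightarrow> bool" where
  "well_ordered_set A \<longleftrightarrow> (\<forall>X \<subseteq> A. X \<noteq> {} \<longrightarrow> (\<exists>m\<in>X. \<forall>x\<in>X. m \<le> x))"

definition well_ordered_valuation :: "('v::ab_group_add \<Rightarrow> 'c::linorder) \<Rightarrow> bool" where
  "well_ordered_valuation \<nu> \<longleftrightarrow> well_ordered_set (\<nu> ` (UNIV - {0}))"

definition adapted_basis :: "('k::field \<Rightarrow> 'v::ab_group_add \<Rightarrow> 'v) \<Rightarrow> ('v \<Rightarrow> 'c::linorder) \<Rightarrow> 'v set \<Rightarrow> bool" where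
  "adapted_basis scale \<nu> B \<longleftrightarrow> is_basis_of scale B UNIV \<and> inj_on \<nu> B"

definition injective_valuation :: "('k::field \<Rightarrow> 'v::ab_group_add \<Rightarrow> 'v) \<Rightarrow> ('v \<Rightarrow> 'c::linorder) \<Rightarrow> bool" where
  "injective_valuation scale \<nu> \<longleftrightarrow> (\<exists>B. adapted_basis scale \<nu> B)"

definition nu_compatible :: "('v::zero \<Rightarrow> 'c) \<Rightarrow> 'i set \<Rightarrow> ('i \<Rightarrow> 'v set) \<Rightarrow> bool" where
  "nu_compatible \<nu> I S \<longleftrightarrow>
     (\<forall>J \<subseteq> I. J \<noteq> {} \<longrightarrow> \<nu> ` ((\<Inter>j\<in>J. S j) - {0}) = (\<Inter>j\<in>J. \<nu> ` (S j - {0})))"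

end

theory Submission
  imports Defs
begin

text \<open>
  With an adapted basis at hand every nonzero vector has a leading basis vector, carrying its
  value, and subtracting a suitable multiple of any vector of the same value strictly lowers
  the value. As values are well-ordered, a subspace \<open>V\<close> is therefore spanned by the basis
  vectors it contains as soon as these attain every value of \<open>V\<close>. For a basis compatible with
  all \<open>S\<^sub>i\<close>, the basis vector of a value common to several \<open>S\<^sub>j\<close> is unique, hence lies in
  their intersection; this gives compatibility and the bases of the intersections. Conversely,
  compatibility lets one pick, for each value, a vector lying in every \<open>S\<^sub>i\<close> that attains it,
  and these vectors form the required basis.
\<close>

definition adapted_family_basis ::
    "('k::field \<Rightarrow> 'v::ab_group_add \<Rightarrow> 'v) \<Rightarrow> ('v \<Rightarrow> 'c::linorder) \<Rightarrow> 'i set \<Rightarrow> ('i \<Rightarrow> 'v set) \<Rightarrow> 'v set \<Rightarrow> bool"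
  where "adapted_family_basis scale \<nu> I S B \<longleftrightarrow>
    adapted_basis scale \<nu> B \<and> (\<forall>i\<in>I. is_basis_of scale (B \<inter> S i) (S i))"

context vector_space
begin

lemma valuation_scale:
  assumes "is_valuation scale \<nu>" "c \<noteq> 0" "x \<noteq> 0"
  shows "\<nu> (c *s x) = \<nu> x"
  using assms unfolding is_valuation_def by blast

lemma valuation_uminus:
  assumes "is_valuation scale \<nu>" "x \<noteq> 0"
  shows "\<nu> (- x) = \<nu> x"
  using valuation_scale[OF assms(1) _ assms(2), of "-1"] by (simp add: scale_minus_left)

lemma valuation_add_le:
  assumes "is_valuation scale \<nu>" "x \<noteq> 0" "y \<noteq> 0" "x + y \<noteq> 0"
  shows "\<nu> (x + y) \<le> max (\<nu> x) (\<nu> y)"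
  using assms unfolding is_valuation_def by blast

lemma valuation_add_less:
  assumes v: "is_valuation scale \<nu>" and "y \<noteq> 0" "z \<noteq> 0" and less: "\<nu> y < \<nu> z"
  shows "y + z \<noteq> 0" and "\<nu> (y + z) = \<nu> z"
proof -
  show nz: "y + z \<noteq> 0"
  proof
    assume "y + z = 0"
    then have "z = - y" by (simp add: eq_neg_iff_add_eq_0 add.commute)
    then show False using valuation_uminus[OF v \<open>y \<noteq> 0\<close>] less by simp
  qed
  have "\<nu> z = \<nu> ((y + z) + (- y))" by simp
  also have "\<dots> \<le> max (\<nu> (y + z)) (\<nu> y)"
    using valuation_add_le[OF v nz, of "- y"] valuation_uminus[OF v \<open>y \<noteq> 0\<close>] assms(2,3) by simp
  finally have "\<nu> z \<le> \<nu> (y + z)" using less by (auto simp: le_max_iff_disj)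
  moreover have "\<nu> (y + z) \<le> \<nu> z" using valuation_add_le[OF v assms(2,3) nz] less by simp
  ultimately show "\<nu> (y + z) = \<nu> z" by simp
qed

lemma valuation_add_neq:
  assumes v: "is_valuation scale \<nu>" and "y \<noteq> 0" "z \<noteq> 0" "\<nu> y \<noteq> \<nu> z"
  shows "y + z \<noteq> 0 \<and> \<nu> (y + z) = max (\<nu> y) (\<nu> z)"
proof (cases "\<nu> y < \<nu> z")
  case True
  then show ?thesis using valuation_add_less[OF v assms(2,3)] by simp
next
  case False
  then have "\<nu> z < \<nu> y" using assms(4) by simp
  then show ?thesis using valuation_add_less[OF v assms(3,2)] by (simp add: add.commute)
qed

lemma valuation_sum_inj_on:
  assumes v: "is_valuation scale \<nu>"
  shows "finite T \<Longrightarrow> T \<noteq> {} \<Longrightarrow> 0 \<notin> T \<Longrightarrow> inj_on \<nu> T \<Longrightarrow> \<forall>t\<in>T. r t \<noteq> 0 \<Longrightarrow>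
    (\<Sum>t\<in>T. r t *s t) \<noteq> 0 \<and> \<nu> (\<Sum>t\<in>T. r t *s t) = Max (\<nu> ` T)"
proof (induction T rule: finite_ne_induct)
  case (singleton x)
  then show ?case using valuation_scale[OF v] by auto
next
  case (insert x F)
  let ?s = "\<Sum>t\<in>F. r t *s t"
  have IH: "?s \<noteq> 0 \<and> \<nu> ?s = Max (\<nu> ` F)" using insert by auto
  have "Max (\<nu> ` F) \<in> \<nu> ` F" using insert.hyps by (intro Max_in) auto
  then obtain f where f: "f \<in> F" "\<nu> f = Max (\<nu> ` F)" by auto
  have x: "x \<noteq> 0" "r x \<noteq> 0" using insert.prems by auto
  have "\<nu> x \<noteq> \<nu> f" using insert f(1) by (auto simp: inj_on_def)
  then have "\<nu> (r x *s x) \<noteq> \<nu> ?s" using IH f valuation_scale[OF v x(2,1)] by simp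
  moreover have "r x *s x \<noteq> 0" using x by simp
  ultimately have "r x *s x + ?s \<noteq> 0 \<and> \<nu> (r x *s x + ?s) = max (\<nu> (r x *s x)) (\<nu> ?s)"
    using valuation_add_neq[OF v] IH by blast
  then show ?case using insert.hyps IH valuation_scale[OF v x(2,1)] by simp
qed

lemma span_obtain_nonzero_coeffs:
  assumes "x \<in> span A"
  obtains T r where "finite T" "T \<subseteq> A" "\<forall>t\<in>T. r t \<noteq> 0" "x = (\<Sum>t\<in>T. r t *s t)"
proof -
  obtain f where "finite {v. f v \<noteq> 0}" "\<forall>v. f v \<noteq> 0 \<longrightarrow> v \<in> A"
    "x = (\<Sum>v | f v \<noteq> 0. f v *s v)"
    using assms unfolding span_explicit' by blast
  then show thesis by (intro that[of "{v. f v \<noteq> 0}" f]) blast+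
qed

lemma independent_if_valuation_inj_on:
  assumes v: "is_valuation scale \<nu>" and "0 \<notin> A" "inj_on \<nu> A"
  shows "independent A"
  unfolding independent_explicit_module
proof (intro allI impI)
  fix t u w
  assume t: "finite t" "t \<subseteq> A" "(\<Sum>v\<in>t. u v *s v) = 0" "w \<in> t"
  define T where "T = {v\<in>t. u v \<noteq> 0}"
  have sum_eq: "(\<Sum>v\<in>T. u v *s v) = (\<Sum>v\<in>t. u v *s v)"
    using t(1) by (intro sum.mono_neutral_left) (auto simp: T_def)
  have T: "finite T" "T \<subseteq> A" "\<forall>v\<in>T. u v \<noteq> 0" using t(1,2) by (auto simp: T_def)
  have "inj_on \<nu> T" using assms(3) T(2) by (rule inj_on_subset)
  show "u w = 0"
  proof (rule ccontr)
    assume "u w \<noteq> 0"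
    then have "T \<noteq> {}" using t(4) by (auto simp: T_def)
    then have "(\<Sum>v\<in>T. u v *s v) \<noteq> 0"
      using valuation_sum_inj_on[OF v T(1) _ _ \<open>inj_on \<nu> T\<close> T(3)] T(2) assms(2) by blast
    with sum_eq t(3) show False by simp
  qed
qed

lemma valuation_leading_term:
  assumes v: "is_valuation scale \<nu>" and A: "0 \<notin> A" "inj_on \<nu> A"
    and x: "x \<in> span A" "x \<noteq> 0"
  obtains b r x' where "b \<in> A" "r \<noteq> 0" "\<nu> b = \<nu> x" "x = r *s b + x'"
    "x' \<in> span {a\<in>A. \<nu> a < \<nu> x}"
proof -
  obtain T r where T: "finite T" "T \<subseteq> A" "\<forall>t\<in>T. r t \<noteq> 0" "x = (\<Sum>t\<in>T. r t *s t)"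
    using span_obtain_nonzero_coeffs[OF x(1)] .
  have "T \<noteq> {}" using T(4) x(2) by auto
  moreover have "inj_on \<nu> T" using A(2) T(2) by (rule inj_on_subset)
  ultimately have max: "\<nu> x = Max (\<nu> ` T)"
    using valuation_sum_inj_on[OF v T(1) _ _ _ T(3)] A(1) T by auto
  have "Max (\<nu> ` T) \<in> \<nu> ` T" using T(1) \<open>T \<noteq> {}\<close> by (intro Max_in) auto
  then obtain b where b: "b \<in> T" "\<nu> b = \<nu> x" using max by auto
  have "t \<in> A \<and> \<nu> t < \<nu> x" if "t \<in> T - {b}" for t
  proof -
    have "\<nu> t \<le> \<nu> x" using that T(1) max by simp
    moreover have "\<nu> t \<noteq> \<nu> b" using that b(1) T(2) A(2) by (auto dest: inj_onD)
    ultimately show ?thesis using that T(2) b(2) by auto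
  qed
  then have "(\<Sum>t\<in>T - {b}. r t *s t) \<in> span {a\<in>A. \<nu> a < \<nu> x}"
    by (intro span_sum span_scale span_base) auto
  moreover have "x = r b *s b + (\<Sum>t\<in>T - {b}. r t *s t)"
    using T(1,4) b(1) by (simp add: sum.remove)
  ultimately show thesis using that b T(2,3) by blast
qed

lemma valuation_in_image_if_in_span:
  assumes "is_valuation scale \<nu>" "0 \<notin> A" "inj_on \<nu> A" "x \<in> span A" "x \<noteq> 0"
  shows "\<nu> x \<in> \<nu> ` A"
proof -
  obtain b r x' where "b \<in> A" "r \<noteq> 0" "\<nu> b = \<nu> x" "x = r *s b + x'"
    "x' \<in> span {a\<in>A. \<nu> a < \<nu> x}"
    using valuation_leading_term[OF assms] by blast
  then show ?thesis by (metis rev_image_eqI)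
qed

lemma valuation_cancel_leading_term:
  assumes v: "is_valuation scale \<nu>" and inj: "injective_valuation scale \<nu>"
    and "x \<noteq> 0" "y \<noteq> 0" and same: "\<nu> x = \<nu> y"
  obtains a where "x - a *s y = 0 \<or> \<nu> (x - a *s y) < \<nu> x"
proof -
  obtain B where "adapted_basis scale \<nu> B" using inj unfolding injective_valuation_def by blast
  then have B: "0 \<notin> B" "inj_on \<nu> B" "span B = UNIV"
    using dependent_zero by (auto simp: adapted_basis_def is_basis_of_def)
  define L where "L = {w\<in>B. \<nu> w < \<nu> x}"
  obtain b r x' where x: "b \<in> B" "r \<noteq> 0" "\<nu> b = \<nu> x" "x = r *s b + x'" "x' \<in> span L"
    using valuation_leading_term[OF v B(1,2), of x] assms(3) B(3) unfolding L_def by auto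
  obtain b' s y' where y: "b' \<in> B" "s \<noteq> 0" "\<nu> b' = \<nu> y" "y = s *s b' + y'" "y' \<in> span L"
    using valuation_leading_term[OF v B(1,2), of y] assms(4) B(3) same unfolding L_def by auto
  have "b' = b" using inj_onD[OF B(2), of b' b] x(1,3) y(1,3) same by simp
  define a where "a = r / s"
  have "x - a *s y = x' - a *s y'"
    using x(4) y(4) \<open>b' = b\<close> y(2) by (simp add: a_def scale_right_distrib scale_scale)
  then have diff: "x - a *s y \<in> span L" using x(5) y(5) by (simp add: span_diff span_scale)
  have "0 \<notin> L" "inj_on \<nu> L" using B(1,2) by (auto simp: L_def intro: inj_on_subset)
  then have "\<nu> (x - a *s y) < \<nu> x" if "x - a *s y \<noteq> 0"
    using valuation_in_image_if_in_span[OF v _ _ diff that] by (auto simp: L_def)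
  then show thesis using that by blast
qed

text \<open>
  Induction along the well-ordered values: a least value of a vector of \<open>V\<close> outside
  \<open>span (B \<inter> V)\<close> could be lowered by subtracting a multiple of a basis vector.
\<close>

lemma is_basis_of_Int_if_values_attained:
  assumes v: "is_valuation scale \<nu>" and wo: "well_ordered_valuation \<nu>"
    and inj: "injective_valuation scale \<nu>"
    and B: "independent B" and V: "subspace V"
    and attained: "\<And>x. x \<in> V \<Longrightarrow> x \<noteq> 0 \<Longrightarrow> \<nu> x \<in> \<nu> ` (B \<inter> V)"
  shows "is_basis_of scale (B \<inter> V) V"
proof -
  have "V \<subseteq> span (B \<inter> V)"
  proof (rule ccontr)
    assume "\<not> V \<subseteq> span (B \<inter> V)"
    define X where "X = \<nu> ` {x\<in>V. x \<notin> span (B \<inter> V)}"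
    have "X \<subseteq> \<nu> ` (UNIV - {0})" "X \<noteq> {}"
      using \<open>\<not> V \<subseteq> span (B \<inter> V)\<close> span_zero by (auto simp: X_def)
    then obtain m where "m \<in> X" "\<forall>c\<in>X. m \<le> c"
      using wo unfolding well_ordered_valuation_def well_ordered_set_def by meson
    then obtain x where x: "x \<in> V" "x \<notin> span (B \<inter> V)"
      and least: "\<And>z. z \<in> V \<Longrightarrow> z \<notin> span (B \<inter> V) \<Longrightarrow> \<nu> x \<le> \<nu> z"
      unfolding X_def by auto
    have "x \<noteq> 0" using x(2) span_zero by auto
    then obtain b where b: "b \<in> B \<inter> V" "\<nu> b = \<nu> x" using attained x(1) by force
    have "b \<noteq> 0" using b(1) B dependent_zero by blast
    obtain a where a: "x - a *s b = 0 \<or> \<nu> (x - a *s b) < \<nu> x"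
      using valuation_cancel_leading_term[OF v inj \<open>x \<noteq> 0\<close> \<open>b \<noteq> 0\<close>] b(2) by auto
    have "x - a *s b \<in> V" using V x(1) b(1) by (simp add: subspace_diff subspace_scale)
    then have lower: "x - a *s b \<in> span (B \<inter> V)"
      using a least[of "x - a *s b"] span_zero by (auto simp: not_le[symmetric])
    have scaled: "a *s b \<in> span (B \<inter> V)" using b(1) by (intro span_scale span_base)
    have "x \<in> span (B \<inter> V)" using span_add[OF lower scaled] by simp
    then show False using x(2) by simp
  qed
  then show ?thesis
    using B V span_subspace[of "B \<inter> V" V] independent_mono[OF B]
    unfolding is_basis_of_def by blast
qed

lemma adapted_family_basis_attains_Inter_values:
  assumes v: "is_valuation scale \<nu>" and B: "adapted_family_basis scale \<nu> I S B"
    and J: "J \<subseteq> I" "J \<noteq> {}" and c: "c \<in> (\<Inter>j\<in>J. \<nu> ` (S j - {0}))"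
  shows "c \<in> \<nu> ` (B \<inter> (\<Inter>j\<in>J. S j))"
proof -
  have inj: "inj_on \<nu> B" and B0: "0 \<notin> B"
    using B dependent_zero by (auto simp: adapted_family_basis_def adapted_basis_def is_basis_of_def)
  have in_S: "\<exists>b\<in>B \<inter> S j. \<nu> b = c" if "j \<in> J" for j
  proof -
    have "c \<in> \<nu> ` (S j - {0})" using c that by blast
    then obtain x where x: "x \<in> S j" "x \<noteq> 0" "\<nu> x = c" by blast
    have "span (B \<inter> S j) = S j"
      using B J(1) that by (auto simp: adapted_family_basis_def is_basis_of_def)
    moreover have "inj_on \<nu> (B \<inter> S j)" using inj by (rule inj_on_subset) blast
    ultimately have "\<nu> x \<in> \<nu> ` (B \<inter> S j)"
      using valuation_in_image_if_in_span[OF v _ _ _ x(2)] x(1) B0 by blast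
    then show ?thesis using x(3) by force
  qed
  obtain j0 where "j0 \<in> J" using J(2) by blast
  then obtain b where b: "b \<in> B" "\<nu> b = c" using in_S by blast
  have "b \<in> S j" if j: "j \<in> J" for j
  proof -
    obtain b' where "b' \<in> B \<inter> S j" "\<nu> b' = c" using in_S[OF j] by blast
    then show ?thesis using inj_onD[OF inj, of b' b] b by auto
  qed
  then show ?thesis using b by blast
qed

lemma nu_compatible_if_adapted_family_basis:
  assumes v: "is_valuation scale \<nu>" and B: "adapted_family_basis scale \<nu> I S B"
  shows "nu_compatible \<nu> I S"
proof -
  have "0 \<notin> B"
    using B dependent_zero by (auto simp: adapted_family_basis_def adapted_basis_def is_basis_of_def)
  show ?thesis
    unfolding nu_compatible_def
  proof (intro allI impI)
    fix J assume J: "J \<subseteq> I" "J \<noteq> {}"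
    show "\<nu> ` ((\<Inter>j\<in>J. S j) - {0}) = (\<Inter>j\<in>J. \<nu> ` (S j - {0}))"
    proof
      show "\<nu> ` ((\<Inter>j\<in>J. S j) - {0}) \<subseteq> (\<Inter>j\<in>J. \<nu> ` (S j - {0}))" by blast
      show "(\<Inter>j\<in>J. \<nu> ` (S j - {0})) \<subseteq> \<nu> ` ((\<Inter>j\<in>J. S j) - {0})"
      proof
        fix c assume "c \<in> (\<Inter>j\<in>J. \<nu> ` (S j - {0}))"
        then obtain b where "b \<in> B \<inter> (\<Inter>j\<in>J. S j)" "\<nu> b = c"
          using adapted_family_basis_attains_Inter_values[OF v B J] by blast
        then show "c \<in> \<nu> ` ((\<Inter>j\<in>J. S j) - {0})" using \<open>0 \<notin> B\<close> by blast
      qed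
    qed
  qed
qed

lemma is_basis_of_Inter_if_adapted_family_basis:
  assumes v: "is_valuation scale \<nu>" and wo: "well_ordered_valuation \<nu>"
    and B: "adapted_family_basis scale \<nu> I S B"
    and sub: "\<forall>i\<in>I. subspace (S i)" and J: "J \<subseteq> I"
  shows "is_basis_of scale (B \<inter> (\<Inter>j\<in>J. S j)) (\<Inter>j\<in>J. S j)"
proof (cases "J = {}")
  case True
  then show ?thesis using B by (simp add: adapted_family_basis_def adapted_basis_def)
next
  case False
  have "injective_valuation scale \<nu>" "independent B"
    using B by (auto simp: adapted_family_basis_def injective_valuation_def adapted_basis_def is_basis_of_def)
  moreover have "subspace (\<Inter>j\<in>J. S j)" using sub J by (intro subspace_Inter) auto
  moreover have "\<nu> x \<in> \<nu> ` (B \<inter> (\<Inter>j\<in>J. S j))" if "x \<in> (\<Inter>j\<in>J. S j)" "x \<noteq> 0" for x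
    using adapted_family_basis_attains_Inter_values[OF v B J False] that by blast
  ultimately show ?thesis by (rule is_basis_of_Int_if_values_attained[OF v wo])
qed

lemma valuation_span_Union_if_adapted_family_basis:
  assumes v: "is_valuation scale \<nu>" and B: "adapted_family_basis scale \<nu> I S B" and J: "J \<subseteq> I"
  shows "\<nu> ` (span (\<Union>j\<in>J. S j) - {0}) = (\<Union>j\<in>J. \<nu> ` (S j - {0}))"
proof
  show "(\<Union>j\<in>J. \<nu> ` (S j - {0})) \<subseteq> \<nu> ` (span (\<Union>j\<in>J. S j) - {0})"
    using span_superset[of "\<Union>j\<in>J. S j"] by blast
  have inj: "inj_on \<nu> B" and B0: "0 \<notin> B"
    using B dependent_zero by (auto simp: adapted_family_basis_def adapted_basis_def is_basis_of_def)
  have "S j \<subseteq> span (B \<inter> (\<Union>j\<in>J. S j))" if "j \<in> J" for j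
  proof -
    have "S j = span (B \<inter> S j)"
      using B J that by (auto simp: adapted_family_basis_def is_basis_of_def)
    also have "\<dots> \<subseteq> span (B \<inter> (\<Union>j\<in>J. S j))" using that by (intro span_mono) blast
    finally show ?thesis .
  qed
  then have "span (\<Union>j\<in>J. S j) \<subseteq> span (B \<inter> (\<Union>j\<in>J. S j))"
    by (intro span_minimal) auto
  moreover have "inj_on \<nu> (B \<inter> (\<Union>j\<in>J. S j))" using inj by (rule inj_on_subset) blast
  ultimately show "\<nu> ` (span (\<Union>j\<in>J. S j) - {0}) \<subseteq> (\<Union>j\<in>J. \<nu> ` (S j - {0}))"
    using valuation_in_image_if_in_span[OF v, of "B \<inter> (\<Union>j\<in>J. S j)"] B0 by blast
qed

lemma adapted_family_basis_if_nu_compatible: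
  assumes v: "is_valuation scale \<nu>" and wo: "well_ordered_valuation \<nu>"
    and inj: "injective_valuation scale \<nu>" and sub: "\<forall>i\<in>I. subspace (S i)"
    and comp: "nu_compatible \<nu> I S"
  obtains B where "adapted_family_basis scale \<nu> I S B"
proof -
  define \<Gamma> where "\<Gamma> = \<nu> ` (UNIV - {0})"
  have "\<forall>c\<in>\<Gamma>. \<exists>x. x \<noteq> 0 \<and> \<nu> x = c \<and> (\<forall>i\<in>I. c \<in> \<nu> ` (S i - {0}) \<longrightarrow> x \<in> S i)"
  proof
    fix c assume "c \<in> \<Gamma>"
    define J where "J = {i\<in>I. c \<in> \<nu> ` (S i - {0})}"
    show "\<exists>x. x \<noteq> 0 \<and> \<nu> x = c \<and> (\<forall>i\<in>I. c \<in> \<nu> ` (S i - {0}) \<longrightarrow> x \<in> S i)"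
    proof (cases "J = {}")
      case True
      then show ?thesis using \<open>c \<in> \<Gamma>\<close> by (auto simp: \<Gamma>_def J_def)
    next
      case False
      have "J \<subseteq> I" by (auto simp: J_def)
      have "c \<in> (\<Inter>j\<in>J. \<nu> ` (S j - {0}))" by (simp add: J_def)
      also have "\<dots> = \<nu> ` ((\<Inter>j\<in>J. S j) - {0})"
        using comp False \<open>J \<subseteq> I\<close> unfolding nu_compatible_def by blast
      finally obtain x where "x \<in> (\<Inter>j\<in>J. S j)" "x \<noteq> 0" "\<nu> x = c" by blast
      then show ?thesis by (intro exI[of _ x]) (auto simp: J_def)
    qed
  qed
  then obtain X where X: "\<forall>c\<in>\<Gamma>.
      X c \<noteq> 0 \<and> \<nu> (X c) = c \<and> (\<forall>i\<in>I. c \<in> \<nu> ` (S i - {0}) \<longrightarrow> X c \<in> S i)"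
    by (rule bchoice[elim_format]) blast
  define B where "B = X ` \<Gamma>"
  have "0 \<notin> B" "inj_on \<nu> B" using X by (auto simp: B_def inj_on_def)
  then have indep: "independent B" by (rule independent_if_valuation_inj_on[OF v])
  have attained: "\<nu> x \<in> \<nu> ` (B \<inter> V)" if "x \<noteq> 0" "X (\<nu> x) \<in> V" for x V
  proof -
    have "\<nu> x \<in> \<Gamma>" using that(1) by (simp add: \<Gamma>_def)
    then have "X (\<nu> x) \<in> B" "\<nu> (X (\<nu> x)) = \<nu> x" using X by (auto simp: B_def)
    then show ?thesis using that(2) by (auto intro!: image_eqI[of _ \<nu> "X (\<nu> x)"])
  qed
  have "is_basis_of scale (B \<inter> UNIV) UNIV"
    by (rule is_basis_of_Int_if_values_attained[OF v wo inj indep subspace_UNIV attained]) auto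
  then have "adapted_basis scale \<nu> B" using \<open>inj_on \<nu> B\<close> by (simp add: adapted_basis_def)
  moreover have "is_basis_of scale (B \<inter> S i) (S i)" if "i \<in> I" for i
  proof (rule is_basis_of_Int_if_values_attained[OF v wo inj indep])
    show "subspace (S i)" using sub that by blast
    fix x assume "x \<in> S i" "x \<noteq> 0"
    moreover have "\<nu> x \<in> \<Gamma>" using \<open>x \<noteq> 0\<close> by (simp add: \<Gamma>_def)
    ultimately show "\<nu> x \<in> \<nu> ` (B \<inter> S i)" using X that by (intro attained) blast+
  qed
  ultimately show thesis using that unfolding adapted_family_basis_def by blast
qed

end

theorem mainTheorem6:
  fixes scale :: "'k::field \<Rightarrow> 'v::ab_group_add \<Rightarrow> 'v"
    and \<nu> :: "'v \<Rightarrow> 'c::linorder"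
    and I :: "'i set" and S :: "'i \<Rightarrow> 'v set"
  assumes vs: "vector_space scale"
    and val: "is_valuation scale \<nu>"
    and wo: "well_ordered_valuation \<nu>"
    and inj: "injective_valuation scale \<nu>"
    and sub: "\<forall>i\<in>I. module.subspace scale (S i)"
  shows "(nu_compatible \<nu> I S \<longleftrightarrow>
           (\<exists>B. adapted_basis scale \<nu> B \<and> (\<forall>i\<in>I. is_basis_of scale (B \<inter> S i) (S i))))
       \<and> (\<forall>B. adapted_basis scale \<nu> B \<and> (\<forall>i\<in>I. is_basis_of scale (B \<inter> S i) (S i)) \<longrightarrow>
            (\<forall>J \<subseteq> I.
               is_basis_of scale (B \<inter> (\<Inter>j\<in>J. S j)) (\<Inter>j\<in>J. S j) \<and>
               \<nu> ` (module.span scale (\<Union>j\<in>J. S j) - {0}) = (\<Union>j\<in>J. \<nu> ` (S j - {0}))))"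
proof -
  interpret vector_space scale by (rule vs)
  have compatible_iff: "nu_compatible \<nu> I S \<longleftrightarrow> (\<exists>B. adapted_family_basis scale \<nu> I S B)"
  proof
    assume "nu_compatible \<nu> I S"
    then obtain B where "adapted_family_basis scale \<nu> I S B"
      by (rule adapted_family_basis_if_nu_compatible[OF val wo inj sub])
    then show "\<exists>B. adapted_family_basis scale \<nu> I S B" ..
  next
    assume "\<exists>B. adapted_family_basis scale \<nu> I S B"
    then obtain B where "adapted_family_basis scale \<nu> I S B" ..
    then show "nu_compatible \<nu> I S" by (rule nu_compatible_if_adapted_family_basis[OF val])
  qed
  have consequences: "is_basis_of scale (B \<inter> (\<Inter>j\<in>J. S j)) (\<Inter>j\<in>J. S j) \<and>
      \<nu> ` (span (\<Union>j\<in>J. S j) - {0}) = (\<Union>j\<in>J. \<nu> ` (S j - {0}))"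
    if "adapted_family_basis scale \<nu> I S B" "J \<subseteq> I" for B J
    using is_basis_of_Inter_if_adapted_family_basis[OF val wo that(1) sub that(2)]
      valuation_span_Union_if_adapted_family_basis[OF val that] ..
  show ?thesis
    unfolding adapted_family_basis_def[symmetric]
    using compatible_iff consequences by simp
qed

end
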